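(* Let $A\in\mathbf L(\mathfrak H)$ be a normal contraction and let $\Sigma=\{T;\mathfrak D_{A^*},\mathfrak D_A,\mathfrak H\}$ be the system with $T=\begin{pmatrix}-A^*&D_A\\ D_{A^*}&A\end{pmatrix}:\mathfrak D_{A^*}\oplus\mathfrak H\to\mathfrak D_A\oplus\mathfrak H$. Then its controllable and observable subspaces coincide, $\mathfrak H^c_\Sigma=\mathfrak H^o_\Sigma$, where $\mathfrak H^c_\Sigma=\overline{\rm span}\{A^nD_{A^*}\mathfrak D_{A^*}:n\ge0\}$ and $\mathfrak H^o_\Sigma=\overline{\rm span}\{A^{*n}D_A\mathfrak D_A:n\ge0\}$, and the following are equivalent: (i) $\Sigma$ is simple; (ii) $\Sigma$ is controllable; (iii) $\Sigma$ is observable; (iv) $\Sigma$ is minimal.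
   Context: A system $\tau=\{T;\mathfrak M,\mathfrak N,\mathfrak H\}$ consists of Hilbert spaces $\mathfrak M$ (input), $\mathfrak N$ (output), $\mathfrak H$ (state) and a bounded operator $T=\begin{pmatrix}D&C\\ B&A\end{pmatrix}:\mathfrak M\oplus\mathfrak H\to\mathfrak N\oplus\mathfrak H$. Its controllable and observable subspaces are $\mathfrak H^c=\overline{\rm span}\{A^nB\mathfrak M:n\ge0\}$, $\mathfrak H^o=\overline{\rm span}\{A^{*n}C^*\mathfrak N:n\ge0\}$; $\tau$ is controllable if $\mathfrak H^c=\mathfrak H$, observable if $\mathfrak H^o=\mathfrak H$, minimal if both, simple if $\mathfrak H=\overline{\mathfrak H^c+\mathfrak H^o}$. $D_A=(I-A^*A)^{1/2}$, $\mathfrak D_A=\overline{\rm ran}\,D_A$. *)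

theory Defs
  imports "HOL-Analysis.Analysis"
begin

definition contraction_op :: "('h::{real_inner,complete_space} \<Rightarrow> 'h) \<Rightarrow> bool" where
  "contraction_op A \<longleftrightarrow> bounded_linear A \<and> (\<forall>x. norm (A x) \<le> norm x)"

definition normal_op :: "('h::{real_inner,complete_space} \<Rightarrow> 'h) \<Rightarrow> bool" where
  "normal_op A \<longleftrightarrow> bounded_linear A \<and> adjoint A \<circ> A = A \<circ> adjoint A"

definition nonneg_op :: "('h::{real_inner,complete_space} \<Rightarrow> 'h) \<Rightarrow> bool" where
  "nonneg_op S \<longleftrightarrow> bounded_linear S \<and> adjoint S = S \<and> (\<forall>x. 0 \<le> S x \<bullet> x)"

definition op_sqrt :: "('h::{real_inner,complete_space} \<Rightarrow> 'h) \<Rightarrow> ('h \<Rightarrow> 'h)" where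
  "op_sqrt P = (THE S. nonneg_op S \<and> S \<circ> S = P)"

definition defect_op :: "('h::{real_inner,complete_space} \<Rightarrow> 'h) \<Rightarrow> ('h \<Rightarrow> 'h)" where
  "defect_op A = op_sqrt (\<lambda>x. x - adjoint A (A x))"

definition defect_space :: "('h::{real_inner,complete_space} \<Rightarrow> 'h) \<Rightarrow> 'h set" where
  "defect_space A = closure (range (defect_op A))"

text \<open>A system with state space 'h, main operator A, input operator B restricted to the
  input space M, output operator C considered on 'h with values in the output space N
  (a closed subspace of 'h containing ran C); C* : N \<rightarrow> 'h is the restriction of adjoint C.\<close>

definition controllable_subspace ::
  "('h::{real_inner,complete_space} \<Rightarrow> 'h) \<Rightarrow> ('m \<Rightarrow> 'h) \<Rightarrow> 'm set \<Rightarrow> 'h set" where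
  "controllable_subspace A B M = closure (span (\<Union>n. (A ^^ n) ` (B ` M)))"

definition observable_subspace ::
  "('h::{real_inner,complete_space} \<Rightarrow> 'h) \<Rightarrow> ('h \<Rightarrow> 'h) \<Rightarrow> 'h set \<Rightarrow> 'h set" where
  "observable_subspace A C N = closure (span (\<Union>n. (adjoint A ^^ n) ` (adjoint C ` N)))"

definition sys_controllable where
  "sys_controllable A B M \<longleftrightarrow> controllable_subspace A B M = UNIV"

definition sys_observable where
  "sys_observable A C N \<longleftrightarrow> observable_subspace A C N = UNIV"

definition sys_minimal where
  "sys_minimal A B M C N \<longleftrightarrow> sys_controllable A B M \<and> sys_observable A C N"

definition sys_simple where
  "sys_simple A B M C N \<longleftrightarrow>
     closure {x + y | x y. x \<in> controllable_subspace A B M \<and> y \<in> observable_subspace A C N} = UNIV"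

end

theory Submission
  imports Defs "HOL-Computational_Algebra.Formal_Power_Series"
begin

(* Let D = D_A.  For normal A we have A A* = A* A, so D_{A*} = D_A and
   the input and output operators of the system coincide with D.  For a closed span of an orbit
   {F^n D u} we use the orthogonal-complement description: x lies in it iff x is orthogonal to
   every y whose G-orbit (G = F* ) lies in ker D.  Since ker D = {z. norm (A z) = norm z} and
   norm (A^n y) = norm (A*^n y) for normal A, the A-orbit of y lies in ker D iff its A*-orbit
   does; hence the controllable and observable subspaces coincide, and simplicity, controllability,
   observability and minimality become the same condition. *)

section \<open>Series in complete normed spaces\<close>

text \<open>The state space is only assumed to be of sort real_inner and complete_space (not of class
  banach), so the two facts about absolutely convergent series that we need are proved here.\<close>
lemma summable_norm_cancel_complete:
  fixes f :: "nat \<Rightarrow> 'a::{real_normed_vector,complete_space}"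
  assumes "summable (\<lambda>n. norm (f n))"
  shows "summable f"
  unfolding summable_iff_convergent Cauchy_convergent_iff [symmetric]
proof (rule metric_CauchyI)
  fix e :: real assume "e > 0"
  have "Cauchy (\<lambda>n. \<Sum>i<n. norm (f i))"
    using assms by (simp add: Cauchy_convergent_iff summable_iff_convergent)
  then obtain N where N: "\<And>m n. m \<ge> N \<Longrightarrow> n \<ge> N \<Longrightarrow> dist (\<Sum>i<m. norm (f i)) (\<Sum>i<n. norm (f i)) < e"
    using \<open>e > 0\<close> by (meson metric_CauchyD)
  have tail: "(\<Sum>i<n. g i) - (\<Sum>i<m. g i) = (\<Sum>i\<in>{m..<n}. g i)"
    if "m \<le> n" for m n and g :: "nat \<Rightarrow> 'b::ab_group_add"
    using sum_diff_nat_ivl[of 0 m n g] that by (simp add: atLeast0LessThan)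
  have ordered: "dist (\<Sum>i<m. f i) (\<Sum>i<n. f i) < e" if "m \<ge> N" "m \<le> n" for m n
  proof -
    have "dist (\<Sum>i<m. f i) (\<Sum>i<n. f i) = norm (\<Sum>i\<in>{m..<n}. f i)"
      using tail[OF \<open>m \<le> n\<close>, of f] by (metis dist_commute dist_norm)
    also have "\<dots> \<le> (\<Sum>i\<in>{m..<n}. norm (f i))" by (rule norm_sum)
    also have "\<dots> = dist (\<Sum>i<m. norm (f i)) (\<Sum>i<n. norm (f i))"
      using tail[OF \<open>m \<le> n\<close>, of "\<lambda>i. norm (f i)"] sum_nonneg[of "{m..<n}" "\<lambda>i. norm (f i)"]
      by (simp add: dist_real_def)
    finally show ?thesis using N[of m n] that by linarith
  qed
  show "\<exists>M. \<forall>m\<ge>M. \<forall>n\<ge>M. dist (\<Sum>i<m. f i) (\<Sum>i<n. f i) < e"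
  proof (intro exI allI impI)
    fix m n assume "N \<le> m" "N \<le> n"
    then show "dist (\<Sum>i<m. f i) (\<Sum>i<n. f i) < e"
      using ordered[of m n] ordered[of n m] by (cases "m \<le> n") (simp_all add: dist_commute)
  qed
qed

lemma norm_suminf_le_complete:
  fixes f :: "nat \<Rightarrow> 'a::{real_normed_vector,complete_space}"
  assumes "summable (\<lambda>n. norm (f n))"
  shows "norm (suminf f) \<le> (\<Sum>n. norm (f n))"
proof (rule tendsto_le[OF trivial_limit_sequentially])
  show "(\<lambda>n. norm (\<Sum>i<n. f i)) \<longlonglongrightarrow> norm (suminf f)"
    by (intro tendsto_norm summable_LIMSEQ summable_norm_cancel_complete[OF assms])
  show "(\<lambda>n. \<Sum>i<n. norm (f i)) \<longlonglongrightarrow> (\<Sum>n. norm (f n))"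
    by (rule summable_LIMSEQ[OF assms])
qed (intro always_eventually allI norm_sum)

section \<open>Hilbert space geometry\<close>

text \<open>A quadratic t^2 q - 2 t c that is nonnegative for all t has no linear term; this is the
  variational step behind orthogonality of best approximations.\<close>
lemma quadratic_nonneg_imp_zero:
  fixes q c :: real
  assumes "\<And>t. 0 \<le> t * t * q - 2 * t * c" and "0 \<le> q"
  shows "c = 0"
proof -
  define t where "t = c / (q + 1)"
  have c: "c = t * (q + 1)" using assms(2) by (simp add: t_def)
  have "0 \<le> t * t * q - 2 * t * c" by (rule assms(1))
  also have "\<dots> = - (t * t * (q + 2))" by (simp add: c algebra_simps)
  finally have "t * t * (q + 2) \<le> 0" by simp
  then have "t * t \<le> 0" using assms(2) by (simp add: mult_le_0_iff)
  then have "t = 0" by (metis antisym mult_eq_0_iff zero_le_square)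
  then show ?thesis by (simp add: c)
qed

lemma parallelogram_midpoint:
  fixes z a b :: "'a::real_inner"
  shows "norm (a - b)^2 = 2 * norm (z - a)^2 + 2 * norm (z - b)^2 - 4 * norm (z - (1/2) *\<^sub>R (a + b))^2"
proof -
  have law: "norm (v - u)^2 + norm (u + v)^2 = 2 * norm u^2 + 2 * norm v^2" for u v :: 'a
    by (simp add: power2_norm_eq_inner inner_simps inner_commute)
  have "(1/2) *\<^sub>R ((z - a) + (z - b)) = (1/2) *\<^sub>R (2 *\<^sub>R z) - (1/2) *\<^sub>R (a + b)"
    by (simp only: scaleR_2 scaleR_diff_right scaleR_add_right) (simp add: algebra_simps)
  then have mid: "z - (1/2) *\<^sub>R (a + b) = (1/2) *\<^sub>R ((z - a) + (z - b))" by simp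
  have "norm (z - (1/2) *\<^sub>R (a + b))^2 = norm ((z - a) + (z - b))^2 / 4"
    unfolding mid by (simp add: power2_eq_square)
  then show ?thesis
    using law[of "z - a" "z - b"] by (simp add: norm_minus_commute[of b a] add.commute[of "z - b"])
qed

lemma Cauchy_if_sq_dist_le:
  fixes s :: "nat \<Rightarrow> 'a::real_normed_vector"
  assumes close: "\<And>m n. norm (s m - s n)^2 \<le> 2 / Suc m + 2 / Suc n"
  shows "Cauchy s"
proof (rule metric_CauchyI)
  fix e :: real assume "e > 0"
  obtain N :: nat where N: "4 / e^2 < N" using reals_Archimedean2 by blast
  have "0 < 4 / e^2" using \<open>e > 0\<close> by simp
  with N have N0: "0 < real N" by linarith
  have "4 / N < e^2" using N N0 \<open>e > 0\<close> by (simp add: field_simps)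
  have "dist (s m) (s n) < e" if "m \<ge> N" "n \<ge> N" for m n
  proof -
    have "2 / Suc m \<le> 2 / N" "2 / Suc n \<le> 2 / N"
      using that N0 by (auto intro!: divide_left_mono)
    then have "norm (s m - s n)^2 < e^2"
      using close[of m n] \<open>4 / N < e^2\<close> by linarith
    then show ?thesis
      using power_less_imp_less_base[of "norm (s m - s n)" 2 e] \<open>e > 0\<close> by (simp add: dist_norm)
  qed
  then show "\<exists>M. \<forall>m\<ge>M. \<forall>n\<ge>M. dist (s m) (s n) < e" by blast
qed

lemma nearest_point_in_closed_subspace:
  fixes z :: "'h::{real_inner,complete_space}"
  assumes V: "subspace V" "closed V"
  shows "\<exists>p\<in>V. \<forall>v\<in>V. norm (z - p) \<le> norm (z - v)"
proof -
  define d where "d = Inf ((\<lambda>v. norm (z - v)^2) ` V)"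
  have "0 \<in> V" using V by (simp add: subspace_0)
  have bdd: "bdd_below ((\<lambda>v. norm (z - v)^2) ` V)" by (rule bdd_belowI[of _ 0]) auto
  have d_le: "d \<le> norm (z - v)^2" if "v \<in> V" for v
    unfolding d_def using that bdd by (simp add: cInf_lower)
  have "\<exists>v\<in>V. norm (z - v)^2 < d + 1 / Suc n" for n
  proof -
    have "Inf ((\<lambda>v. norm (z - v)^2) ` V) < d + 1 / Suc n" by (simp add: d_def)
    then show ?thesis using \<open>0 \<in> V\<close> bdd by (subst (asm) cInf_less_iff) auto
  qed
  then obtain s where s: "\<And>n. s n \<in> V" "\<And>n. norm (z - s n)^2 < d + 1 / Suc n"
    by metis
  text \<open>The parallelogram law turns near-minimality into the Cauchy property.\<close>
  have close: "norm (s m - s n)^2 \<le> 2 / Suc m + 2 / Suc n" for m n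
  proof -
    have "(1/2) *\<^sub>R (s m + s n) \<in> V"
      using V s(1) by (simp add: subspace_add subspace_scale)
    then have "d \<le> norm (z - (1/2) *\<^sub>R (s m + s n))^2" by (rule d_le)
    then show ?thesis using parallelogram_midpoint[of "s m" "s n" z] s(2)[of m] s(2)[of n] by linarith
  qed
  have "Cauchy s" by (rule Cauchy_if_sq_dist_le[OF close])
  then obtain p where lim: "s \<longlonglongrightarrow> p" using Cauchy_convergent_iff convergent_def by blast
  have "p \<in> V" using V(2) s(1) lim closed_sequentially by blast
  have "norm (z - p)^2 \<le> d"
  proof (rule LIMSEQ_le)
    show "(\<lambda>n. norm (z - s n)^2) \<longlonglongrightarrow> norm (z - p)^2" by (intro tendsto_intros lim)
    show "(\<lambda>n. d + 1 / real (Suc n)) \<longlonglongrightarrow> d"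
      using tendsto_add[OF tendsto_const LIMSEQ_inverse_real_of_nat] by (simp add: inverse_eq_divide)
  qed (use s(2) less_imp_le in blast)
  then have "norm (z - p) \<le> norm (z - v)" if "v \<in> V" for v
    using d_le[OF that] by (simp add: power2_le_imp_le)
  with \<open>p \<in> V\<close> show ?thesis by blast
qed

lemma nearest_point_orthogonal:
  fixes z p :: "'a::real_inner"
  assumes "subspace V" "p \<in> V" and nearest: "\<And>v. v \<in> V \<Longrightarrow> norm (z - p) \<le> norm (z - v)"
    and "v \<in> V"
  shows "(z - p) \<bullet> v = 0"
proof (rule quadratic_nonneg_imp_zero[where q = "norm v ^ 2"])
  fix t :: real
  have "p + t *\<^sub>R v \<in> V" using assms by (simp add: subspace_add subspace_scale)
  then have "norm (z - p)^2 \<le> norm (z - (p + t *\<^sub>R v))^2"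
    by (simp add: nearest power_mono)
  also have "\<dots> = norm (z - p)^2 + t * t * norm v ^ 2 - 2 * t * ((z - p) \<bullet> v)"
    unfolding power2_norm_eq_inner by (simp add: inner_simps inner_commute algebra_simps)
  finally show "0 \<le> t * t * norm v ^ 2 - 2 * t * ((z - p) \<bullet> v)" by simp
qed simp

lemma orthogonal_projection_exists:
  fixes z :: "'h::{real_inner,complete_space}"
  assumes "subspace V" "closed V"
  shows "\<exists>p\<in>V. \<forall>v\<in>V. (z - p) \<bullet> v = 0"
  using nearest_point_in_closed_subspace[OF assms] nearest_point_orthogonal[OF assms(1)] by metis

lemma subspace_closure:
  fixes S :: "'a::real_normed_vector set"
  assumes "subspace S"
  shows "subspace (closure S)"
  unfolding subspace_def
proof (intro conjI ballI allI)
  show "0 \<in> closure S" using assms closure_subset subspace_0 by blast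
next
  fix x y assume "x \<in> closure S" "y \<in> closure S"
  then have "x + y \<in> closure S + closure S" by (rule set_plus_intro)
  also have "\<dots> \<subseteq> closure (S + S)" by (rule closure_sum)
  also have "\<dots> \<subseteq> closure S"
    using assms by (intro closure_mono) (auto simp: set_plus_def subspace_add)
  finally show "x + y \<in> closure S" .
next
  fix c :: real and x assume "x \<in> closure S"
  then have "c *\<^sub>R x \<in> (*\<^sub>R) c ` closure S" by (rule imageI)
  also have "\<dots> = closure ((*\<^sub>R) c ` S)" by (rule closure_scaleR)
  also have "\<dots> \<subseteq> closure S" using assms by (intro closure_mono) (auto simp: subspace_scale)
  finally show "c *\<^sub>R x \<in> closure S" .
qed

lemma closure_span_orthogonal_iff:
  fixes G :: "'h::{real_inner,complete_space} set"
  shows "x \<in> closure (span G) \<longleftrightarrow> (\<forall>y. (\<forall>g\<in>G. g \<bullet> y = 0) \<longrightarrow> x \<bullet> y = 0)"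
proof
  assume x: "x \<in> closure (span G)"
  show "\<forall>y. (\<forall>g\<in>G. g \<bullet> y = 0) \<longrightarrow> x \<bullet> y = 0"
  proof (intro allI impI)
    fix y assume "\<forall>g\<in>G. g \<bullet> y = 0"
    moreover have "subspace {x. x \<bullet> y = 0}" by (simp add: subspace_def inner_add_left)
    ultimately have "span G \<subseteq> {x. x \<bullet> y = 0}" by (intro span_minimal) auto
    moreover have "closed {x. x \<bullet> y = 0}" by (intro closed_Collect_eq continuous_intros)
    ultimately have "closure (span G) \<subseteq> {x. x \<bullet> y = 0}" by (rule closure_minimal)
    then show "x \<bullet> y = 0" using x by blast
  qed
next
  assume orth: "\<forall>y. (\<forall>g\<in>G. g \<bullet> y = 0) \<longrightarrow> x \<bullet> y = 0"
  let ?X = "closure (span G)"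
  obtain p where p: "p \<in> ?X" "\<And>v. v \<in> ?X \<Longrightarrow> (x - p) \<bullet> v = 0"
    using orthogonal_projection_exists[OF subspace_closure[OF subspace_span] closed_closure]
    by blast
  have "g \<bullet> (x - p) = 0" if "g \<in> G" for g
  proof -
    have "g \<in> ?X" using that closure_subset span_superset by blast
    then show ?thesis using p(2)[of g] by (simp add: inner_commute)
  qed
  then have "x \<bullet> (x - p) = 0" using orth by blast
  moreover have "p \<bullet> (x - p) = 0" using p by (simp add: inner_commute)
  ultimately have "(x - p) \<bullet> (x - p) = 0" by (simp add: inner_diff_left)
  then show "x \<in> ?X" using p(1) by simp
qed

lemma riesz_representation:
  fixes \<phi> :: "'h::{real_inner,complete_space} \<Rightarrow> real"
  assumes "bounded_linear \<phi>"
  shows "\<exists>w. \<forall>x. \<phi> x = x \<bullet> w"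
proof (cases "\<forall>x. \<phi> x = 0")
  case True
  then show ?thesis by (intro exI[of _ 0]) simp
next
  case False
  then obtain z where z: "\<phi> z \<noteq> 0" by blast
  interpret bounded_linear \<phi> by (rule assms)
  let ?K = "{x. \<phi> x = 0}"
  have "subspace ?K" by (simp add: subspace_def add scaleR)
  moreover have "closed ?K" by (intro closed_Collect_eq continuous_intros linear_continuous_on assms)
  ultimately obtain p where p: "\<phi> p = 0" "\<And>v. \<phi> v = 0 \<Longrightarrow> (z - p) \<bullet> v = 0"
    using orthogonal_projection_exists[of ?K z] by blast
  define u where "u = z - p"
  have \<phi>u: "\<phi> u = \<phi> z" using p(1) by (simp add: u_def diff)
  then have "u \<bullet> u \<noteq> 0" using z by auto
  have "\<phi> x = x \<bullet> ((\<phi> u / (u \<bullet> u)) *\<^sub>R u)" for x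
  proof -
    have "\<phi> (x - (\<phi> x / \<phi> u) *\<^sub>R u) = 0" using \<phi>u z by (simp add: diff scaleR)
    then have "u \<bullet> (x - (\<phi> x / \<phi> u) *\<^sub>R u) = 0" using p(2) by (simp add: u_def)
    then show ?thesis
      using \<open>u \<bullet> u \<noteq> 0\<close> \<phi>u z by (simp add: inner_diff_right inner_commute field_simps)
  qed
  then show ?thesis by blast
qed

text \<open>By the Riesz theorem the library's adjoint (defined by a choice) really is the adjoint.\<close>
lemma adjoint_inner:
  fixes f :: "'h::{real_inner,complete_space} \<Rightarrow> 'h"
  assumes "bounded_linear f"
  shows "f x \<bullet> y = x \<bullet> adjoint f y"
proof -
  have "\<exists>w. \<forall>x. f x \<bullet> y = x \<bullet> w" for y
    using bounded_linear_compose[OF bounded_linear_inner_left assms]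
    by (intro riesz_representation) (simp add: o_def)
  then have "\<exists>g. \<forall>x y. f x \<bullet> y = x \<bullet> g y" by metis
  then have "\<forall>x y. f x \<bullet> y = x \<bullet> adjoint f y"
    unfolding adjoint_def by (rule someI_ex)
  then show ?thesis by blast
qed

lemma adjoint_inner_left:
  fixes f :: "'h::{real_inner,complete_space} \<Rightarrow> 'h"
  assumes "bounded_linear f"
  shows "adjoint f x \<bullet> y = x \<bullet> f y"
  using adjoint_inner[OF assms, of y x] by (simp add: inner_commute)

lemma adjoint_adjoint_hilbert:
  fixes f :: "'h::{real_inner,complete_space} \<Rightarrow> 'h"
  assumes "bounded_linear f"
  shows "adjoint (adjoint f) = f"
  by (rule adjoint_unique) (simp add: adjoint_inner_left[OF assms])

lemma norm_adjoint_le: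
  fixes f :: "'h::{real_inner,complete_space} \<Rightarrow> 'h"
  assumes "bounded_linear f" and bound: "\<And>x. norm (f x) \<le> K * norm x"
  shows "norm (adjoint f y) \<le> K * norm y"
proof (cases "adjoint f y = 0")
  case True
  then show ?thesis using bound[of 0] by (simp add: mult_nonneg_nonneg order.trans[OF norm_ge_zero bound[of y]])
next
  case False
  have "norm (adjoint f y)^2 = f (adjoint f y) \<bullet> y"
    by (simp add: adjoint_inner[OF assms(1)] power2_norm_eq_inner)
  also have "\<dots> \<le> norm (f (adjoint f y)) * norm y" by (rule norm_cauchy_schwarz)
  also have "\<dots> \<le> K * norm (adjoint f y) * norm y" by (simp add: bound mult_right_mono)
  finally show ?thesis using False by (simp add: power2_eq_square)
qed

lemma bounded_linear_adjoint:
  fixes f :: "'h::{real_inner,complete_space} \<Rightarrow> 'h"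
  assumes "bounded_linear f"
  shows "bounded_linear (adjoint f)"
proof -
  obtain K where K: "\<And>x. norm (f x) \<le> norm x * K" using bounded_linear.bounded[OF assms] by blast
  have "adjoint f (x + y) = adjoint f x + adjoint f y" for x y
    by (rule vector_eq_ldot[THEN iffD1]) (simp add: adjoint_inner[OF assms, symmetric] inner_add_right)
  moreover have "adjoint f (c *\<^sub>R x) = c *\<^sub>R adjoint f x" for c x
    by (rule vector_eq_ldot[THEN iffD1]) (simp add: adjoint_inner[OF assms, symmetric])
  moreover have "norm (adjoint f y) \<le> norm y * K" for y
    using norm_adjoint_le[OF assms, of K y] K by (simp add: mult.commute)
  ultimately show ?thesis by (intro bounded_linear_intro[of _ K]) auto
qed

lemma nonneg_form_zero_imp_zero:
  fixes Q :: "'a::real_inner \<Rightarrow> 'a"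
  assumes "linear Q" and sym: "\<And>a b. Q a \<bullet> b = a \<bullet> Q b" and pos: "\<And>a. 0 \<le> Q a \<bullet> a"
    and "Q v \<bullet> v = 0"
  shows "Q v = 0"
proof -
  have "Q v \<bullet> Q v = 0"
  proof (rule quadratic_nonneg_imp_zero[where q = "Q (Q v) \<bullet> Q v"])
    fix t :: real
    have "0 \<le> Q (v - t *\<^sub>R Q v) \<bullet> (v - t *\<^sub>R Q v)" by (rule pos)
    also have "\<dots> = Q v \<bullet> v - 2 * t * (Q v \<bullet> Q v) + t * t * (Q (Q v) \<bullet> Q v)"
      using sym[of "Q v" v]
      by (simp add: linear_diff[OF \<open>linear Q\<close>] linear_scale[OF \<open>linear Q\<close>]
          inner_commute algebra_simps)
    finally show "0 \<le> t * t * (Q (Q v) \<bullet> Q v) - 2 * t * (Q v \<bullet> Q v)"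
      using \<open>Q v \<bullet> v = 0\<close> by simp
  qed (rule pos)
  then show ?thesis by simp
qed

section \<open>The binomial series of sqrt(1 - t)\<close>

text \<open>sqrt(1 - t) = (\<Sum>k. sqrt_coeff k * t^k) for \<bar>t\<bar> \<le> 1.\<close>
definition sqrt_coeff :: "nat \<Rightarrow> real" where
  "sqrt_coeff k = (-1)^k * ((1/2) gchoose k)"

lemma gbinomial_Suc_recurrence:
  fixes a :: real
  shows "(a gchoose Suc k) * (real k + 1) = (a gchoose k) * (a - real k)"
  using gbinomial_mult_1[of a k] by (simp add: algebra_simps)

lemma sqrt_coeff_0 [simp]: "sqrt_coeff 0 = 1"
  by (simp add: sqrt_coeff_def)

lemma sqrt_coeff_Suc: "sqrt_coeff (Suc k) = sqrt_coeff k * (real k - 1/2) / (real k + 1)"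
proof -
  have "sqrt_coeff (Suc k) * (real k + 1) = - ((-1)^k * (((1/2) gchoose Suc k) * (real k + 1)))"
    by (simp add: sqrt_coeff_def)
  also have "\<dots> = - ((-1)^k * (((1/2) gchoose k) * (1/2 - real k)))"
    by (simp only: gbinomial_Suc_recurrence)
  also have "\<dots> = sqrt_coeff k * (real k - 1/2)"
    by (simp add: sqrt_coeff_def algebra_simps)
  finally show ?thesis by (simp add: field_simps)
qed

lemma sqrt_coeff_neg: "k \<ge> 1 \<Longrightarrow> sqrt_coeff k < 0"
proof (induction k rule: nat_induct_at_least)
  case base
  then show ?case using sqrt_coeff_Suc[of 0] by simp
next
  case (Suc n)
  then have "sqrt_coeff n * (real n - 1/2) < 0" by (simp add: mult_neg_pos)
  then show ?case by (simp add: sqrt_coeff_Suc divide_neg_pos)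
qed

text \<open>The partial sums are positive: they equal the binomial coefficient of n - 1/2 over n.\<close>
lemma sqrt_coeff_partial_sum_pos: "(\<Sum>k\<le>n. sqrt_coeff k) > 0"
proof -
  have "(\<Sum>k\<le>n. sqrt_coeff k) = (-1)^n * ((-1/2) gchoose n)"
    using gbinomial_sum_lower_neg[of "1/2::real" n] by (simp add: sqrt_coeff_def mult.commute)
  also have "\<dots> = (real n - 1/2) gchoose n"
    using gbinomial_minus[of "1/2::real" n] by (simp add: algebra_simps)
  also have "\<dots> = (\<Prod>i = 0..<n. (real n - 1/2 - real i) / real (n - i))"
    by (rule gbinomial_altdef_of_nat)
  also have "\<dots> > 0" by (intro prod_pos) auto
  finally show ?thesis .
qed

text \<open>Since the tail is negative and the partial sums stay positive, the absolute values
  have partial sums bounded by 2.\<close>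
lemma sqrt_coeff_abs_summable: "summable (\<lambda>k. \<bar>sqrt_coeff k\<bar>)"
proof (rule summableI_nonneg_bounded[of _ 2])
  fix n
  show "(\<Sum>k<n. \<bar>sqrt_coeff k\<bar>) \<le> 2"
  proof (cases n)
    case (Suc m)
    have "(\<Sum>k\<le>m. \<bar>sqrt_coeff k\<bar>) = (\<Sum>k\<le>m. (if k = 0 then 2 else 0) - sqrt_coeff k)"
      by (rule sum.cong) (auto simp: sqrt_coeff_neg abs_of_neg)
    also have "\<dots> = 2 - (\<Sum>k\<le>m. sqrt_coeff k)" by (simp add: sum_subtractf)
    finally show ?thesis
      using Suc sqrt_coeff_partial_sum_pos[of m] by (simp add: lessThan_Suc_atMost)
  qed simp
qed simp

lemma sqrt_coeff_summable: "summable sqrt_coeff"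
  using sqrt_coeff_abs_summable summable_rabs_cancel by blast

lemma sqrt_coeff_suminf_nonneg: "0 \<le> suminf sqrt_coeff"
  using summable_LIMSEQ'[OF sqrt_coeff_summable] sqrt_coeff_partial_sum_pos
  by (intro LIMSEQ_le_const) (auto intro: less_imp_le)

text \<open>Squaring the series of sqrt(1 - t) gives 1 - t: the Cauchy product of the
  coefficients is 1, -1, 0, 0, ... (Vandermonde's identity).\<close>
lemma sqrt_coeff_convolution:
  "(\<Sum>k\<le>n. sqrt_coeff k * sqrt_coeff (n - k)) = (if n = 0 then 1 else if n = 1 then -1 else 0)"
proof -
  have "(\<Sum>k\<le>n. sqrt_coeff k * sqrt_coeff (n - k))
      = (-1)^n * (\<Sum>k\<le>n. ((1/2::real) gchoose k) * ((1/2) gchoose (n - k)))"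
    unfolding sum_distrib_left
  proof (rule sum.cong)
    fix k assume "k \<in> {..n}"
    then have "(-1::real)^k * (-1)^(n-k) = (-1)^n" by (simp flip: power_add)
    then show "sqrt_coeff k * sqrt_coeff (n - k) = (-1)^n * (((1/2) gchoose k) * ((1/2) gchoose (n - k)))"
      unfolding sqrt_coeff_def by (metis mult.assoc mult.left_commute)
  qed simp
  also have "\<dots> = (-1)^n * ((1/2 + 1/2::real) gchoose n)"
    by (simp add: atMost_atLeast0 gbinomial_Vandermonde)
  also have "\<dots> = (-1)^n * real (1 choose n)"
    using binomial_gbinomial[of 1 n, where 'a=real] by simp
  finally show ?thesis
    by (cases "n = 0 \<or> n = 1") (auto simp: binomial_eq_0)
qed

lemma summable_on_product_nonneg:
  fixes f g :: "nat \<Rightarrow> real"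
  assumes "summable f" "summable g" "\<And>k. 0 \<le> f k" "\<And>j. 0 \<le> g j"
  shows "(\<lambda>(k, j). f k * g j) summable_on UNIV"
proof -
  have "(g has_sum suminf g) UNIV"
    using assms by (intro sums_nonneg_imp_has_sum summable_sums) auto
  then have "((\<lambda>j. f k * g j) has_sum (f k * suminf g)) UNIV" for k
    by (rule has_sum_cmult_right)
  moreover have "(\<lambda>k. f k * suminf g) summable_on UNIV"
    using assms summable_mult2[OF assms(1), of "suminf g"] suminf_nonneg[OF assms(2)]
    by (subst summable_on_UNIV_nonneg_real_iff) auto
  ultimately have "(\<lambda>(k, j). f k * g j) summable_on (SIGMA k:UNIV. UNIV)"
    using assms by (intro summable_on_SigmaI[where g = "\<lambda>k. f k * suminf g"]) auto
  then show ?thesis by simp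
qed

text \<open>A double series weighted by a bounded function of j + k can be summed along the
  diagonals j + k = n; this is how the square of a power series in an operator is computed.\<close>
lemma double_series_diagonal:
  fixes a m :: "nat \<Rightarrow> real"
  assumes a: "summable (\<lambda>k. \<bar>a k\<bar>)" and m: "\<And>n. \<bar>m n\<bar> \<le> C"
  shows "((\<lambda>n. (\<Sum>i\<le>n. a i * a (n - i)) * m n) has_sum (\<Sum>k. a k * (\<Sum>j. a j * m (j + k)))) UNIV"
proof -
  define g where "g = (\<lambda>(k, j). a k * a j * m (j + k))"
  have "0 \<le> C" using m[of 0] by linarith
  have majorant: "(\<lambda>(k, j). \<bar>a k\<bar> * (\<bar>a j\<bar> * C)) summable_on UNIV"
    using a summable_mult2[OF a, of C] \<open>0 \<le> C\<close> by (intro summable_on_product_nonneg) auto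
  have "(\<lambda>p. norm (g p)) summable_on UNIV"
  proof (rule summable_on_comparison_test[OF majorant])
    fix p :: "nat \<times> nat"
    show "norm (g p) \<le> (\<lambda>(k, j). \<bar>a k\<bar> * (\<bar>a j\<bar> * C)) p"
      using m by (cases p) (auto simp: g_def abs_mult mult.assoc intro!: mult_left_mono)
  qed simp
  then have "g summable_on UNIV" by (rule abs_summable_summable)
  then obtain G where G: "(g has_sum G) UNIV" by (auto simp: summable_on_def)
  have row: "((\<lambda>j. g (k, j)) has_sum a k * (\<Sum>j. a j * m (j + k))) UNIV" for k
  proof -
    have abs: "summable (\<lambda>j. \<bar>a j * m (j + k)\<bar>)"
      using m by (intro summable_comparison_test'[OF summable_mult2[OF a, of C]])
                 (auto simp: abs_mult mult_left_mono)
    then have "((\<lambda>j. a j * m (j + k)) has_sum (\<Sum>j. a j * m (j + k))) UNIV"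
      using norm_summable_imp_has_sum[OF _ summable_sums[OF summable_rabs_cancel[OF abs]]] by simp
    then show ?thesis
      unfolding g_def by (simp add: mult.assoc has_sum_cmult_right)
  qed
  have "(g has_sum G) (SIGMA k:UNIV. UNIV)" using G by simp
  then have "(\<lambda>k. a k * (\<Sum>j. a j * m (j + k))) sums G"
    by (rule has_sum_imp_sums[OF has_sum_SigmaD[OF _ row]])
  then have iterated: "(\<Sum>k. a k * (\<Sum>j. a j * m (j + k))) = G"
    by (rule sums_unique[symmetric])
  have "(g has_sum G) UNIV \<longleftrightarrow> ((\<lambda>(n, i). a i * a (n - i) * m n) has_sum G) (SIGMA n:UNIV. {..n})"
    by (rule has_sum_reindex_bij_witness[where i = "\<lambda>(n, i). (i, n - i)" and j = "\<lambda>(k, l). (k + l, k)"])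
       (auto simp: g_def add.commute)
  with G have "((\<lambda>(n, i). a i * a (n - i) * m n) has_sum G) (SIGMA n:UNIV. {..n})" by simp
  then have "((\<lambda>n. \<Sum>i\<le>n. a i * a (n - i) * m n) has_sum G) UNIV"
    by (rule has_sum_SigmaD) (simp add: has_sum_finite)
  then show ?thesis
    unfolding iterated by (simp add: sum_distrib_right)
qed

section \<open>The square root of I - T\<close>

text \<open>For a self-adjoint contraction T the binomial series sqrt(I - T) = sum of
  sqrt_coeff k T^k converges and defines the unique nonnegative square root of I - T.\<close>
locale selfadjoint_contraction =
  fixes T :: "'h::{real_inner,complete_space} \<Rightarrow> 'h"
  assumes T_bounded_linear: "bounded_linear T"
    and T_symmetric: "\<And>x y. T x \<bullet> y = x \<bullet> T y"
    and T_contractive: "\<And>x. norm (T x) \<le> norm x"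
begin

lemma power_bounded_linear: "bounded_linear (T ^^ k)"
  by (induction k) (simp_all add: bounded_linear_ident bounded_linear_compose[OF T_bounded_linear] id_def)

lemma power_contractive: "norm ((T ^^ k) x) \<le> norm x"
  by (induction k) (auto intro: order_trans[OF T_contractive])

lemma power_symmetric: "(T ^^ k) x \<bullet> y = x \<bullet> (T ^^ k) y"
  by (induction k arbitrary: x y) (auto simp: T_symmetric funpow_swap1)

lemma power_inner_bound: "\<bar>(T ^^ k) x \<bullet> y\<bar> \<le> norm x * norm y"
  using Cauchy_Schwarz_ineq2[of "(T ^^ k) x" y] power_contractive[of k x]
  by (meson mult_right_mono norm_ge_zero order_trans)

definition sqrt_series :: "'h \<Rightarrow> 'h" where
  "sqrt_series x = (\<Sum>k. sqrt_coeff k *\<^sub>R (T ^^ k) x)"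

lemma sqrt_series_term_bound: "norm (sqrt_coeff k *\<^sub>R (T ^^ k) x) \<le> \<bar>sqrt_coeff k\<bar> * norm x"
  by (simp add: mult_left_mono power_contractive)

lemma sqrt_series_abs_summable: "summable (\<lambda>k. norm (sqrt_coeff k *\<^sub>R (T ^^ k) x))"
  by (rule summable_comparison_test'[OF summable_mult2[OF sqrt_coeff_abs_summable, of "norm x"]])
     (simp add: mult_left_mono power_contractive)

lemma sqrt_series_summable: "summable (\<lambda>k. sqrt_coeff k *\<^sub>R (T ^^ k) x)"
  by (rule summable_norm_cancel_complete[OF sqrt_series_abs_summable])

lemma sqrt_series_inner: "sqrt_series x \<bullet> y = (\<Sum>k. sqrt_coeff k * ((T ^^ k) x \<bullet> y))"
  using bounded_linear.suminf[OF bounded_linear_inner_left[of y] sqrt_series_summable[of x]]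
  by (simp add: sqrt_series_def)

lemma sqrt_series_commute:
  assumes "bounded_linear R" and "\<And>x. R (T x) = T (R x)"
  shows "R (sqrt_series x) = sqrt_series (R x)"
proof -
  have "R ((T ^^ k) x) = (T ^^ k) (R x)" for k
    by (induction k) (simp_all add: assms(2))
  then show ?thesis
    using bounded_linear.suminf[OF assms(1) sqrt_series_summable, of x]
    by (simp add: sqrt_series_def linear_scale[OF bounded_linear.linear[OF assms(1)]])
qed

lemma sqrt_series_bounded_linear: "bounded_linear sqrt_series"
proof (rule bounded_linear_intro[of _ "\<Sum>k. \<bar>sqrt_coeff k\<bar>"])
  fix x y :: 'h and c :: real
  show "sqrt_series (x + y) = sqrt_series x + sqrt_series y"
    using suminf_add[OF sqrt_series_summable sqrt_series_summable, of x y]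
    by (simp add: sqrt_series_def linear_add[OF bounded_linear.linear[OF power_bounded_linear]]
        scaleR_add_right)
  show "sqrt_series (c *\<^sub>R x) = c *\<^sub>R sqrt_series x"
    using suminf_scaleR_right[OF sqrt_series_summable, of c x]
    by (simp add: sqrt_series_def linear_scale[OF bounded_linear.linear[OF power_bounded_linear]]
        algebra_simps)
  have "norm (sqrt_series x) \<le> (\<Sum>k. norm (sqrt_coeff k *\<^sub>R (T ^^ k) x))"
    unfolding sqrt_series_def by (rule norm_suminf_le_complete[OF sqrt_series_abs_summable])
  also have "\<dots> \<le> (\<Sum>k. \<bar>sqrt_coeff k\<bar> * norm x)"
    by (rule suminf_le[OF sqrt_series_term_bound sqrt_series_abs_summable summable_mult2[OF sqrt_coeff_abs_summable]])
  also have "\<dots> = (\<Sum>k. \<bar>sqrt_coeff k\<bar>) * norm x"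
    by (rule suminf_mult2[OF sqrt_coeff_abs_summable, symmetric])
  finally show "norm (sqrt_series x) \<le> norm x * (\<Sum>k. \<bar>sqrt_coeff k\<bar>)" by (simp only: mult.commute)
qed

lemma sqrt_series_symmetric: "sqrt_series x \<bullet> y = x \<bullet> sqrt_series y"
proof -
  have "(T ^^ k) x \<bullet> y = (T ^^ k) y \<bullet> x" for k
    by (metis power_symmetric inner_commute)
  then have "sqrt_series x \<bullet> y = sqrt_series y \<bullet> x" by (simp only: sqrt_series_inner)
  then show ?thesis by (simp add: inner_commute)
qed

text \<open>Nonnegativity: all coefficients but the first are negative and
  (T^k x) \<bullet> x \<le> norm x^2, so the form is bounded below by (sum of the coefficients) norm x^2.\<close>
lemma sqrt_series_nonneg: "0 \<le> sqrt_series x \<bullet> x"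
proof -
  have sg: "summable (\<lambda>k. sqrt_coeff k * ((T ^^ k) x \<bullet> x))"
    using power_inner_bound[of _ x x]
    by (intro summable_comparison_test'[OF summable_mult2[OF sqrt_coeff_abs_summable, of "norm x * norm x"]])
       (auto simp: abs_mult mult_left_mono)
  have le: "sqrt_coeff k * norm x ^ 2 \<le> sqrt_coeff k * ((T ^^ k) x \<bullet> x)" for k
  proof (cases "k = 0")
    case False
    then have "sqrt_coeff k < 0" by (simp add: sqrt_coeff_neg)
    moreover have "(T ^^ k) x \<bullet> x \<le> norm x ^ 2"
      using power_inner_bound[of k x x] by (simp add: power2_eq_square)
    ultimately show ?thesis by (simp add: mult_left_mono_neg)
  qed (simp add: power2_norm_eq_inner)
  have "(\<Sum>k. sqrt_coeff k * norm x ^ 2) \<le> sqrt_series x \<bullet> x"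
    unfolding sqrt_series_inner by (rule suminf_le[OF le summable_mult2[OF sqrt_coeff_summable] sg])
  moreover have "(\<Sum>k. sqrt_coeff k * norm x ^ 2) = suminf sqrt_coeff * norm x ^ 2"
    by (rule suminf_mult2[OF sqrt_coeff_summable, symmetric])
  moreover have "0 \<le> suminf sqrt_coeff * norm x ^ 2"
    by (simp add: sqrt_coeff_suminf_nonneg)
  ultimately show ?thesis by linarith
qed

text \<open>The square of the series is I - T, by the Cauchy-product identity for the coefficients.\<close>
lemma sqrt_series_square: "sqrt_series (sqrt_series x) = x - T x"
proof (rule vector_eq_rdot[THEN iffD1], rule allI)
  fix z
  define m where "m n = (T ^^ n) x \<bullet> z" for n
  define c where "c n = (\<Sum>i\<le>n. sqrt_coeff i * sqrt_coeff (n - i))" for n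
  have inner: "(T ^^ k) x \<bullet> sqrt_series z = (\<Sum>j. sqrt_coeff j * m (j + k))" for k
  proof -
    have "(T ^^ k) x \<bullet> sqrt_series z = sqrt_series ((T ^^ k) x) \<bullet> z" by (rule sqrt_series_symmetric[symmetric])
    also have "\<dots> = (\<Sum>j. sqrt_coeff j * m (j + k))" by (simp add: sqrt_series_inner m_def funpow_add)
    finally show ?thesis .
  qed
  have "sqrt_series (sqrt_series x) \<bullet> z = (\<Sum>k. sqrt_coeff k * ((T ^^ k) x \<bullet> sqrt_series z))"
    unfolding sqrt_series_symmetric[of "sqrt_series x"] by (rule sqrt_series_inner)
  also have "\<dots> = (\<Sum>k. sqrt_coeff k * (\<Sum>j. sqrt_coeff j * m (j + k)))" by (simp only: inner)
  finally have iterated: "sqrt_series (sqrt_series x) \<bullet> z = (\<Sum>k. sqrt_coeff k * (\<Sum>j. sqrt_coeff j * m (j + k)))" .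
  have "\<bar>m n\<bar> \<le> norm x * norm z" for n unfolding m_def by (rule power_inner_bound)
  then have "((\<lambda>n. c n * m n) has_sum (\<Sum>k. sqrt_coeff k * (\<Sum>j. sqrt_coeff j * m (j + k)))) UNIV"
    unfolding c_def by (rule double_series_diagonal[OF sqrt_coeff_abs_summable])
  moreover have "((\<lambda>n. c n * m n) has_sum (\<Sum>n\<in>{0, 1}. c n * m n)) UNIV"
    by (rule has_sum_finite_neutralI[where B = "{0, 1}"]) (auto simp: c_def sqrt_coeff_convolution)
  ultimately have "sqrt_series (sqrt_series x) \<bullet> z = (\<Sum>n\<in>{0, 1}. c n * m n)"
    unfolding iterated by (rule has_sum_unique)
  also have "\<dots> = m 0 - m 1" by (simp add: c_def sqrt_coeff_convolution)
  finally show "sqrt_series (sqrt_series x) \<bullet> z = (x - T x) \<bullet> z" by (simp add: m_def inner_diff_left)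
qed

lemma sqrt_series_nonneg_op: "nonneg_op sqrt_series"
  unfolding nonneg_op_def
  using sqrt_series_bounded_linear sqrt_series_nonneg sqrt_series_symmetric by (auto intro: adjoint_unique)

text \<open>Uniqueness: a nonnegative square root R of I - T commutes with T, hence with
  sqrt_series; then v = R x - sqrt_series x satisfies (R + sqrt_series) v = 0, which forces
  R v = sqrt_series v = 0 and so v = 0.\<close>
lemma sqrt_series_unique:
  assumes "nonneg_op R" and square: "\<And>x. R (R x) = x - T x"
  shows "R = sqrt_series"
proof
  fix x
  have "bounded_linear R" and R_sym: "\<And>a b. R a \<bullet> b = a \<bullet> R b" and R_nonneg: "\<And>a. 0 \<le> R a \<bullet> a"
    using assms(1) adjoint_inner[of R] unfolding nonneg_op_def by auto
  have "linear R" "linear sqrt_series"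
    using \<open>bounded_linear R\<close> sqrt_series_bounded_linear bounded_linear.linear by blast+
  have "R (T a) = T (R a)" for a
  proof -
    have "T a = a - R (R a)" using square[of a] by simp
    then have "R (T a) = R a - R (R (R a))" by (simp add: linear_diff[OF \<open>linear R\<close>])
    also have "\<dots> = T (R a)" using square[of "R a"] by simp
    finally show ?thesis .
  qed
  then have commute: "R (sqrt_series a) = sqrt_series (R a)" for a
    by (rule sqrt_series_commute[OF \<open>bounded_linear R\<close>])
  define v where "v = R x - sqrt_series x"
  have "R v + sqrt_series v = R (R x) - sqrt_series (sqrt_series x)"
    by (simp add: v_def linear_diff[OF \<open>linear R\<close>] linear_diff[OF \<open>linear sqrt_series\<close>] commute)
  then have "R v + sqrt_series v = 0" by (simp add: square sqrt_series_square)
  then have "R v \<bullet> v + sqrt_series v \<bullet> v = 0" by (simp flip: inner_add_left)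
  then have "R v \<bullet> v = 0" "sqrt_series v \<bullet> v = 0"
    using R_nonneg[of v] sqrt_series_nonneg[of v] by linarith+
  then have "R v = 0" "sqrt_series v = 0"
    using nonneg_form_zero_imp_zero[OF \<open>linear R\<close> R_sym R_nonneg]
      nonneg_form_zero_imp_zero[OF \<open>linear sqrt_series\<close> sqrt_series_symmetric sqrt_series_nonneg] by auto
  then have "v \<bullet> v = 0"
    by (simp add: v_def inner_diff_left R_sym sqrt_series_symmetric)
  then show "R x = sqrt_series x" by (simp add: v_def)
qed

lemma op_sqrt_eq_sqrt_series: "op_sqrt (\<lambda>x. x - T x) = sqrt_series"
  unfolding op_sqrt_def
proof (rule the_equality)
  show "nonneg_op sqrt_series \<and> sqrt_series \<circ> sqrt_series = (\<lambda>x. x - T x)"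
    by (auto simp: sqrt_series_nonneg_op sqrt_series_square)
  show "S = sqrt_series" if "nonneg_op S \<and> S \<circ> S = (\<lambda>x. x - T x)" for S
    using that sqrt_series_unique[of S] by (metis comp_apply)
qed

end

lemma defect_op_square:
  assumes "contraction_op A"
  shows "nonneg_op (defect_op A)" and "defect_op A (defect_op A x) = x - adjoint A (A x)"
proof -
  have A: "bounded_linear A" "\<And>x. norm (A x) \<le> norm x"
    using assms unfolding contraction_op_def by auto
  have "selfadjoint_contraction (\<lambda>x. adjoint A (A x))"
  proof (rule selfadjoint_contraction.intro)
    show "bounded_linear (\<lambda>x. adjoint A (A x))"
      using bounded_linear_compose[OF bounded_linear_adjoint[OF A(1)] A(1)] by (simp add: o_def)
    show "adjoint A (A u) \<bullet> v = u \<bullet> adjoint A (A v)" for u v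
      by (simp add: adjoint_inner_left[OF A(1)] adjoint_inner[OF A(1)])
    have "norm (adjoint A y) \<le> norm y" for y
      using norm_adjoint_le[OF A(1), of 1 y] A(2) by simp
    then show "norm (adjoint A (A u)) \<le> norm u" for u
      using A(2)[of u] order_trans by blast
  qed
  then interpret selfadjoint_contraction "\<lambda>x. adjoint A (A x)" .
  have "defect_op A = sqrt_series" unfolding defect_op_def by (rule op_sqrt_eq_sqrt_series)
  then show "nonneg_op (defect_op A)" "defect_op A (defect_op A x) = x - adjoint A (A x)"
    by (simp_all add: sqrt_series_nonneg_op sqrt_series_square)
qed

section \<open>Orbits, defect operators and normality\<close>

lemma funpow_adjoint_inner:
  fixes F G :: "'a::real_inner \<Rightarrow> 'a"
  assumes "\<And>a b. F a \<bullet> b = a \<bullet> G b"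
  shows "(F ^^ n) a \<bullet> b = a \<bullet> (G ^^ n) b"
  by (induction n arbitrary: a b) (simp_all add: assms funpow_swap1)

lemma orthogonal_to_orbit_iff:
  fixes D F G :: "'a::real_inner \<Rightarrow> 'a"
  assumes adj: "\<And>a b. F a \<bullet> b = a \<bullet> G b" and sym: "\<And>a b. D a \<bullet> b = a \<bullet> D b"
    and "range D \<subseteq> M"
  shows "(\<forall>g\<in>(\<Union>n. (F ^^ n) ` D ` M). g \<bullet> y = 0) \<longleftrightarrow> (\<forall>n. D ((G ^^ n) y) = 0)"
proof
  assume orth: "\<forall>g\<in>(\<Union>n. (F ^^ n) ` D ` M). g \<bullet> y = 0"
  show "\<forall>n. D ((G ^^ n) y) = 0"
  proof
    fix n
    have "D ((G ^^ n) y) \<in> M" using \<open>range D \<subseteq> M\<close> by blast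
    then have "(F ^^ n) (D (D ((G ^^ n) y))) \<bullet> y = 0" using orth by blast
    then have "D ((G ^^ n) y) \<bullet> D ((G ^^ n) y) = 0"
      by (simp add: funpow_adjoint_inner[OF adj] sym)
    then show "D ((G ^^ n) y) = 0" by simp
  qed
next
  assume "\<forall>n. D ((G ^^ n) y) = 0"
  then show "\<forall>g\<in>(\<Union>n. (F ^^ n) ` D ` M). g \<bullet> y = 0"
    by (auto simp: funpow_adjoint_inner[OF adj] sym)
qed

lemma closure_span_orbit_iff:
  fixes D F G :: "'h::{real_inner,complete_space} \<Rightarrow> 'h"
  assumes "\<And>a b. F a \<bullet> b = a \<bullet> G b" and "\<And>a b. D a \<bullet> b = a \<bullet> D b" and "range D \<subseteq> M"
  shows "x \<in> closure (span (\<Union>n. (F ^^ n) ` D ` M)) \<longleftrightarrow> (\<forall>y. (\<forall>n. D ((G ^^ n) y) = 0) \<longrightarrow> x \<bullet> y = 0)"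
  by (simp only: closure_span_orthogonal_iff orthogonal_to_orbit_iff[OF assms])

lemma defect_op_eq_zero_iff:
  assumes "contraction_op A"
  shows "defect_op A z = 0 \<longleftrightarrow> norm (A z) = norm z"
proof -
  have "bounded_linear A" using assms by (simp add: contraction_op_def)
  have "bounded_linear (defect_op A)" "adjoint (defect_op A) = defect_op A"
    using defect_op_square(1)[OF assms] by (auto simp: nonneg_op_def)
  then have "norm (defect_op A z)^2 = defect_op A (defect_op A z) \<bullet> z"
    by (metis adjoint_inner power2_norm_eq_inner)
  also have "\<dots> = norm z ^ 2 - norm (A z) ^ 2"
    by (simp add: defect_op_square(2)[OF assms] inner_diff_left adjoint_inner_left[OF \<open>bounded_linear A\<close>]
        power2_norm_eq_inner)
  finally have "defect_op A z = 0 \<longleftrightarrow> norm (A z)^2 = norm z^2" by auto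
  then show ?thesis by (simp add: power2_eq_iff_nonneg)
qed

lemma normal_power_commute:
  assumes "normal_op A"
  shows "(adjoint A ^^ m) ((A ^^ n) x) = (A ^^ n) ((adjoint A ^^ m) x)"
proof -
  have "adjoint A (A x) = A (adjoint A x)" for x
    using assms by (metis comp_apply normal_op_def)
  then have "adjoint A ((A ^^ n) x) = (A ^^ n) (adjoint A x)" for x
    by (induction n) simp_all
  then show ?thesis by (induction m) simp_all
qed

lemma normal_norm_power_adjoint:
  fixes A :: "'h::{real_inner,complete_space} \<Rightarrow> 'h"
  assumes "normal_op A"
  shows "norm ((A ^^ n) y) = norm ((adjoint A ^^ n) y)"
proof -
  have A: "bounded_linear A" using assms by (simp add: normal_op_def)
  have "norm ((A ^^ n) y)^2 = y \<bullet> (adjoint A ^^ n) ((A ^^ n) y)"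
    by (simp add: power2_norm_eq_inner funpow_adjoint_inner[OF adjoint_inner[OF A]])
  also have "\<dots> = y \<bullet> (A ^^ n) ((adjoint A ^^ n) y)" by (simp add: normal_power_commute[OF assms])
  also have "\<dots> = norm ((adjoint A ^^ n) y)^2"
    by (simp add: power2_norm_eq_inner funpow_adjoint_inner[OF adjoint_inner_left[OF A]] inner_commute)
  finally show ?thesis by (simp add: power2_eq_iff_nonneg)
qed

text \<open>For normal A, I - A A* = I - A* A, so D_{A*} = D_A.\<close>
lemma normal_defect_op_adjoint:
  assumes "normal_op A"
  shows "defect_op (adjoint A) = defect_op A"
proof -
  have A: "bounded_linear A" using assms by (simp add: normal_op_def)
  have "adjoint (adjoint A) (adjoint A x) = adjoint A (A x)" for x
    using normal_power_commute[OF assms, of 1 1 x] by (simp add: adjoint_adjoint_hilbert[OF A])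
  then show ?thesis unfolding defect_op_def by simp
qed

text \<open>For a normal contraction, D_A annihilates the A*-orbit of y iff it annihilates the
  A-orbit of y: both say that n \<mapsto> norm (A^n y) = norm (A*^n y) is constant.\<close>
lemma normal_defect_kernel_orbits:
  assumes "contraction_op A" and "normal_op A"
  shows "(\<forall>n. defect_op A ((adjoint A ^^ n) y) = 0) \<longleftrightarrow> (\<forall>n. defect_op A ((A ^^ n) y) = 0)"
proof -
  have "(\<forall>n. defect_op A ((adjoint A ^^ n) y) = 0)
      \<longleftrightarrow> (\<forall>n. norm ((adjoint A ^^ Suc n) y) = norm ((adjoint A ^^ n) y))"
    using normal_norm_power_adjoint[OF assms(2), of 1]
    by (simp add: defect_op_eq_zero_iff[OF assms(1)])
  also have "\<dots> \<longleftrightarrow> (\<forall>n. norm ((A ^^ Suc n) y) = norm ((A ^^ n) y))"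
    by (simp only: normal_norm_power_adjoint[OF assms(2)])
  also have "\<dots> \<longleftrightarrow> (\<forall>n. defect_op A ((A ^^ n) y) = 0)"
    by (simp add: defect_op_eq_zero_iff[OF assms(1)])
  finally show ?thesis .
qed

lemma sum_set_subspace:
  assumes "subspace H"
  shows "{x + y | x y. x \<in> H \<and> y \<in> H} = H"
proof
  show "{x + y | x y. x \<in> H \<and> y \<in> H} \<subseteq> H" using assms subspace_add by blast
  show "H \<subseteq> {x + y | x y. x \<in> H \<and> y \<in> H}"
    using assms subspace_0 by force
qed

theorem proposition2p3:
  fixes A :: "'h::{real_inner,complete_space} \<Rightarrow> 'h"
  assumes "contraction_op A" and "normal_op A"
  defines "B \<equiv> defect_op (adjoint A)" and "M \<equiv> defect_space (adjoint A)"
      and "C \<equiv> defect_op A" and "N \<equiv> defect_space A"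
  shows "controllable_subspace A B M = observable_subspace A C N
         \<and> (sys_simple A B M C N \<longleftrightarrow> sys_controllable A B M)
         \<and> (sys_controllable A B M \<longleftrightarrow> sys_observable A C N)
         \<and> (sys_observable A C N \<longleftrightarrow> sys_minimal A B M C N)"
proof -
  have A: "bounded_linear A" using assms(1) by (simp add: contraction_op_def)
  have BC: "B = C" and MN: "M = N"
    unfolding B_def C_def M_def N_def defect_space_def by (simp_all add: normal_defect_op_adjoint[OF assms(2)])
  have "bounded_linear C" and C_self: "adjoint C = C"
    using defect_op_square(1)[OF assms(1)] unfolding C_def nonneg_op_def by auto
  then have C_sym: "C a \<bullet> b = a \<bullet> C b" for a b by (metis adjoint_inner)
  have "range C \<subseteq> N" unfolding C_def N_def defect_space_def by (rule closure_subset)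
  text \<open>Both subspaces are the orthogonal complement of the vectors whose orbits lie in ker D_A.\<close>
  have "x \<in> controllable_subspace A B M \<longleftrightarrow> x \<in> observable_subspace A C N" for x
    unfolding controllable_subspace_def observable_subspace_def BC MN C_self
      closure_span_orbit_iff[OF adjoint_inner[OF A] C_sym \<open>range C \<subseteq> N\<close>]
      closure_span_orbit_iff[OF adjoint_inner_left[OF A] C_sym \<open>range C \<subseteq> N\<close>]
    using normal_defect_kernel_orbits[OF assms(1,2)] by (simp add: C_def)
  then have eq: "controllable_subspace A B M = observable_subspace A C N" by blast
  have "subspace (controllable_subspace A B M)" "closed (controllable_subspace A B M)"
    unfolding controllable_subspace_def by (simp_all add: subspace_closure subspace_span)
  then have "sys_simple A B M C N \<longleftrightarrow> sys_controllable A B M"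
    unfolding sys_simple_def sys_controllable_def eq[symmetric] by (simp add: sum_set_subspace)
  with eq show ?thesis
    unfolding sys_controllable_def sys_observable_def sys_minimal_def by simp
qed

end
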